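(* Let $A,B,D>0$ be constants and let $f:(0,\infty)\to\mathbb{R}$ be defined by $$f(X)=A(2DX)^{-1/2}-B(2DX)^{-3/2}.$$ Set $\tilde{A}=A/(2D)^{1/2}$ and $\tilde{B}=B/(2D)^{3/2}$. Let $\beta>0$ and $\alpha>1$, and let $g:(0,\infty)\to(-\infty,0]$ be given by $g(X)=-\beta X^{\alpha}$. If $$\dot{g}\!\left(\frac{5\tilde{B}}{\tilde{A}}\right)>\dot{f}\!\left(\frac{5\tilde{B}}{\tilde{A}}\right),$$ where the dot denotes the derivative with respect to $X$, then the function $f-g$ (the M-Köhler curve) has at least one local maximum and at least one local minimum on $(0,\infty)$.
   Context: The function $f$ is the Köhler curve written in the variable $X=r^2/(2D)$ (scaled squared droplet radius), and $g$ is a sink term; the condensational growth model is $\dot X=\lambda-(f(X)-g(X))$, and $f-g$ is called the M-Köhler curve. *)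

theory Defs
  imports "HOL-Analysis.Analysis"
begin

text \<open>Koehler curve in the variable X = r^2/(2D).\<close>
definition kohler :: "real \<Rightarrow> real \<Rightarrow> real \<Rightarrow> real \<Rightarrow> real" where
  "kohler A B D X = A * (2 * D * X) powr (-1/2) - B * (2 * D * X) powr (-3/2)"

definition sink :: "real \<Rightarrow> real \<Rightarrow> real \<Rightarrow> real" where
  "sink \<beta> \<alpha> X = - \<beta> * X powr \<alpha>"

definition local_max_on :: "real set \<Rightarrow> (real \<Rightarrow> real) \<Rightarrow> real \<Rightarrow> bool" where
  "local_max_on S h x \<longleftrightarrow> x \<in> S \<and> (\<exists>e>0. \<forall>y\<in>S. \<bar>y - x\<bar> < e \<longrightarrow> h y \<le> h x)"

definition local_min_on :: "real set \<Rightarrow> (real \<Rightarrow> real) \<Rightarrow> real \<Rightarrow> bool" where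
  "local_min_on S h x \<longleftrightarrow> x \<in> S \<and> (\<exists>e>0. \<forall>y\<in>S. \<bar>y - x\<bar> < e \<longrightarrow> h y \<ge> h x)"

end

theory Submission
  imports Defs "HOL-Real_Asymp.Real_Asymp"
begin

text \<open>Write h = f - g. Near 0 the term -B(2DX)^(-3/2) sends h to -\<infinity>, and for large X
  the term \<beta>X^\<alpha> sends h to +\<infinity>. The hypothesis says h' < 0 at X0 = 5B~/A~, so h
  exceeds h(X0) slightly to the left of X0 and falls below it slightly to the right.
  Hence h rises and then falls on a compact interval inside (0, X0], and falls and then
  rises on one inside [X0, \<infinity>); the extreme value theorem yields an interior maximum and
  an interior minimum respectively.\<close>

lemma local_min_on_iff_local_max_on_uminus:
  "local_min_on S h x \<longleftrightarrow> local_max_on S (\<lambda>y. - h y) x"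
  by (simp add: local_min_on_def local_max_on_def)

lemma exists_local_max_on_if_peak:
  fixes h :: "real \<Rightarrow> real"
  assumes cont: "continuous_on {a..b} h" and "a < c" "c < b" "h a < h c" "h b < h c"
    and "{a<..<b} \<subseteq> S"
  shows "\<exists>x. local_max_on S h x"
proof -
  obtain x where x: "x \<in> {a..b}" and max: "\<And>y. y \<in> {a..b} \<Longrightarrow> h y \<le> h x"
    using continuous_attains_sup[OF compact_Icc _ cont] \<open>a < c\<close> \<open>c < b\<close> by auto
  have "h c \<le> h x"
    using max \<open>a < c\<close> \<open>c < b\<close> by simp
  then have "a < x" "x < b"
    using x \<open>h a < h c\<close> \<open>h b < h c\<close> by (auto simp: order.order_iff_strict)
  have "local_max_on S h x"
    unfolding local_max_on_def
  proof (intro conjI exI[of _ "min (x - a) (b - x)"] ballI impI)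
    show "x \<in> S" "0 < min (x - a) (b - x)"
      using \<open>a < x\<close> \<open>x < b\<close> \<open>{a<..<b} \<subseteq> S\<close> by auto
    show "h y \<le> h x" if "\<bar>y - x\<bar> < min (x - a) (b - x)" for y
      using max[of y] that by (auto simp: abs_less_iff)
  qed
  then show ?thesis ..
qed

lemma exists_local_min_on_if_valley:
  fixes h :: "real \<Rightarrow> real"
  assumes "continuous_on {a..b} h" and "a < c" "c < b" "h c < h a" "h c < h b"
    and "{a<..<b} \<subseteq> S"
  shows "\<exists>x. local_min_on S h x"
  using exists_local_max_on_if_peak[of a b "\<lambda>y. - h y" c S] assms
  by (auto intro: continuous_intros simp: local_min_on_iff_local_max_on_uminus)

lemma exists_local_max_on_before_descent:
  fixes h :: "real \<Rightarrow> real"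
  assumes cont: "continuous_on {a<..} h" and lim: "filterlim h at_bot (at_right a)"
    and "a < x\<^sub>0" and "(h has_real_derivative h') (at x\<^sub>0)" "h' < 0"
  shows "\<exists>x. local_max_on {a<..} h x"
proof -
  obtain d where "d > 0" and left: "\<And>k. 0 < k \<Longrightarrow> k < d \<Longrightarrow> h x\<^sub>0 < h (x\<^sub>0 - k)"
    using DERIV_neg_dec_left[OF assms(4,5)] by blast
  define c where "c = x\<^sub>0 - min (d / 2) ((x\<^sub>0 - a) / 2)"
  have c: "a < c" "c < x\<^sub>0" "h x\<^sub>0 < h c"
    using \<open>d > 0\<close> \<open>a < x\<^sub>0\<close> left[of "min (d / 2) ((x\<^sub>0 - a) / 2)"]
    unfolding c_def by (auto simp: min_def field_simps)
  have "eventually (\<lambda>x. h x \<le> h x\<^sub>0 - 1 \<and> x \<in> {a<..<c}) (at_right a)"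
    using lim[unfolded filterlim_at_bot, rule_format, of "h x\<^sub>0 - 1"]
      eventually_at_right_real[OF \<open>a < c\<close>]
    by (rule eventually_conj)
  then obtain e where e: "h e \<le> h x\<^sub>0 - 1" "a < e" "e < c"
    using eventually_happens'[of "at_right a"] by auto
  show ?thesis
  proof (rule exists_local_max_on_if_peak[of e x\<^sub>0 h c])
    show "continuous_on {e..x\<^sub>0} h"
      by (rule continuous_on_subset[OF cont]) (use e in auto)
  qed (use c e in auto)
qed

lemma exists_local_min_on_after_descent:
  fixes h :: "real \<Rightarrow> real"
  assumes cont: "continuous_on {a<..} h" and lim: "filterlim h at_top at_top"
    and "a < x\<^sub>0" and "(h has_real_derivative h') (at x\<^sub>0)" "h' < 0"
  shows "\<exists>x. local_min_on {a<..} h x"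
proof -
  obtain d where "d > 0" and right: "\<And>k. 0 < k \<Longrightarrow> k < d \<Longrightarrow> h (x\<^sub>0 + k) < h x\<^sub>0"
    using DERIV_neg_dec_right[OF assms(4,5)] by blast
  define c where "c = x\<^sub>0 + d / 2"
  have c: "x\<^sub>0 < c" "h c < h x\<^sub>0"
    using \<open>d > 0\<close> right unfolding c_def by auto
  have "eventually (\<lambda>x. h x\<^sub>0 + 1 \<le> h x \<and> c < x) at_top"
    using lim[unfolded filterlim_at_top, rule_format, of "h x\<^sub>0 + 1"]
      eventually_gt_at_top[of c]
    by (rule eventually_conj)
  then obtain M where M: "h x\<^sub>0 + 1 \<le> h M" "c < M"
    using eventually_happens'[of "at_top :: real filter"] by auto
  show ?thesis
  proof (rule exists_local_min_on_if_valley[of x\<^sub>0 M h c])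
    show "continuous_on {x\<^sub>0..M} h"
      by (rule continuous_on_subset[OF cont]) (use \<open>a < x\<^sub>0\<close> in auto)
  qed (use c M \<open>a < x\<^sub>0\<close> in auto)
qed

lemma kohler_minus_sink_at_right_0:
  fixes B D \<alpha> :: real
  assumes "B > 0" "D > 0" "\<alpha> > 0"
  shows "filterlim (\<lambda>X. kohler A B D X - sink \<beta> \<alpha> X) at_bot (at_right 0)"
  unfolding kohler_def sink_def using assms by real_asymp

lemma kohler_minus_sink_at_top:
  fixes D \<beta> \<alpha> :: real
  assumes "D > 0" "\<beta> > 0" "\<alpha> > 0"
  shows "filterlim (\<lambda>X. kohler A B D X - sink \<beta> \<alpha> X) at_top at_top"
  unfolding kohler_def sink_def using assms by real_asymp

lemma continuous_on_kohler_minus_sink: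
  assumes "D > 0"
  shows "continuous_on {0<..} (\<lambda>X. kohler A B D X - sink \<beta> \<alpha> X)"
  unfolding kohler_def sink_def using assms by (intro continuous_intros) auto

lemma kohler_differentiable:
  assumes "D > 0" "X > 0"
  shows "kohler A B D differentiable at X"
  unfolding kohler_def[abs_def] using assms
  by (auto intro!: derivative_eq_intros simp: real_differentiable_def)

lemma sink_differentiable:
  assumes "X > 0"
  shows "sink \<beta> \<alpha> differentiable at X"
  unfolding sink_def[abs_def] using assms
  by (auto intro!: derivative_eq_intros simp: real_differentiable_def)

theorem proposition1:
  fixes A B D \<beta> \<alpha> :: real
  assumes "A > 0" and "B > 0" and "D > 0" and "\<beta> > 0" and "\<alpha> > 1"
    and "deriv (sink \<beta> \<alpha>) (5 * (B / (2*D) powr (3/2)) / (A / (2*D) powr (1/2)))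
         > deriv (kohler A B D) (5 * (B / (2*D) powr (3/2)) / (A / (2*D) powr (1/2)))"
  shows "(\<exists>x. local_max_on {0<..} (\<lambda>X. kohler A B D X - sink \<beta> \<alpha> X) x)
       \<and> (\<exists>x. local_min_on {0<..} (\<lambda>X. kohler A B D X - sink \<beta> \<alpha> X) x)"
proof -
  define X\<^sub>0 where "X\<^sub>0 = 5 * (B / (2*D) powr (3/2)) / (A / (2*D) powr (1/2))"
  have "X\<^sub>0 > 0"
    unfolding X\<^sub>0_def using assms by auto
  have "((\<lambda>X. kohler A B D X - sink \<beta> \<alpha> X) has_real_derivative
          deriv (kohler A B D) X\<^sub>0 - deriv (sink \<beta> \<alpha>) X\<^sub>0) (at X\<^sub>0)"
    using kohler_differentiable[OF \<open>D > 0\<close> \<open>X\<^sub>0 > 0\<close>] sink_differentiable[OF \<open>X\<^sub>0 > 0\<close>]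
    by (intro DERIV_diff) (simp_all add: DERIV_deriv_iff_real_differentiable)
  moreover have "deriv (kohler A B D) X\<^sub>0 - deriv (sink \<beta> \<alpha>) X\<^sub>0 < 0"
    using assms(6) unfolding X\<^sub>0_def by simp
  ultimately show ?thesis
    using \<open>X\<^sub>0 > 0\<close> assms continuous_on_kohler_minus_sink
      exists_local_max_on_before_descent[OF _ kohler_minus_sink_at_right_0]
      exists_local_min_on_after_descent[OF _ kohler_minus_sink_at_top]
    by auto
qed

end
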